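(* Let $s\in(0,1)$, $\kappa>0$, and let $\mathcal{T}$ and $|\cdot|$ be as in the context. (i) If $s\le 3/4$, then (for every $\kappa>0$) there is $\tau\in\mathcal{T}\setminus\{\Xi\}$ with $|\tau|\le|\Xi|$. (ii) If $s>3/4$, then there is $\kappa_0(s)>0$ such that for all $\kappa\in(0,\kappa_0)$ one has $|\Xi|<|\tau|$ for all $\tau\in\mathcal{T}\setminus\{\Xi\}$; moreover, in this case, for every $\beta\in\mathbb{R}$ the set $\mathcal{T}_{<\beta}:=\{\tau\in\mathcal{T}:|\tau|<\beta\}$ is finite.
   Context: Fix $d\ge1$. Consider formal symbols (non-planar decorated rooted trees): a noise symbol $\Xi$ and monomials $\mathbf{X}^k$, $k\in\mathbb{N}^{1+d}$ (with $\mathbf{1}:=\mathbf{X}^0$), together with abstract integration maps $\mathcal{I}$ and $\mathcal{I}_j$ ($j=1,\dots,d$) and a commutative, associative product (with unit $\mathbf{1}$, and $\mathbf{X}^k\mathbf{X}^m=\mathbf{X}^{k+m}$). The set $\mathcal{T}$ is the smallest set containing $\Xi$ and all $\mathbf{X}^k$ such that whenever $\tau_1,\tau_2,\tau_3\in\mathcal{T}$, $j\in\{1,\dots,d\}$, $k\in\mathbb{N}^{1+d}$, the symbols $\mathbf{X}^k\mathcal{I}(\tau_1)$, $\mathbf{X}^k\mathcal{I}_j(\tau_1)$, $\mathbf{X}^k\mathcal{I}(\tau_1)\mathcal{I}(\tau_2)$ and $\mathcal{I}(\tau_1)\mathcal{I}(\tau_2)\mathcal{I}(\tau_3)$ belong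 to $\mathcal{T}$, with the convention that $\mathcal{I}(\mathbf{X}^k)=0$ (integration is not applied to pure monomials). Homogeneity: $|\Xi|:=-s-\frac32-\kappa$, $|\mathbf{X}^k|:=2sk_0+\sum_{i=1}^dk_i$, $|\mathcal{I}(\tau)|:=|\tau|+2s$, $|\mathcal{I}_j(\tau)|:=|\tau|+2s-1$, and the homogeneity of a product is the sum of the homogeneities of the factors. *)

theory Defs
  imports Complex_Main "HOL-Library.Multiset"
begin

text \<open>Symbols as non-planar decorated rooted trees.  A node carries a monomial
  exponent k (a function nat => nat, components 0..d used, component 0 = time)
  and a multiset of outgoing edges (j, subtree); edge label j = 0 means the
  integration map I, label j >= 1 means I_j.
  Using a multiset makes the product commutative and associative, and
  Node 0 {#} is the unit 1 = X^0.\<close>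

datatype sym = Xi | Node "nat \<Rightarrow> nat" "(nat \<times> sym) multiset"

definition monomial :: "(nat \<Rightarrow> nat) \<Rightarrow> sym" where
  "monomial k = Node k {#}"

definition is_monomial :: "sym \<Rightarrow> bool" where
  "is_monomial t \<longleftrightarrow> (\<exists>k. t = monomial k)"

definition valid_exp :: "nat \<Rightarrow> (nat \<Rightarrow> nat) \<Rightarrow> bool" where
  "valid_exp d k \<longleftrightarrow> (\<forall>i>d. k i = 0)"

text \<open>The set of symbols T (depending on the dimension d).  Integration is
  never applied to pure monomials (I(X^k) = 0).\<close>

inductive_set T :: "nat \<Rightarrow> sym set" for d :: nat where
  T_Xi: "Xi \<in> T d"
| T_mono: "valid_exp d k \<Longrightarrow> monomial k \<in> T d"
| T_I: "\<lbrakk>valid_exp d k; t1 \<in> T d; \<not> is_monomial t1\<rbrakk>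
          \<Longrightarrow> Node k {#(0, t1)#} \<in> T d"
| T_Ij: "\<lbrakk>valid_exp d k; 1 \<le> j; j \<le> d; t1 \<in> T d; \<not> is_monomial t1\<rbrakk>
          \<Longrightarrow> Node k {#(j, t1)#} \<in> T d"
| T_II: "\<lbrakk>valid_exp d k; t1 \<in> T d; \<not> is_monomial t1; t2 \<in> T d; \<not> is_monomial t2\<rbrakk>
          \<Longrightarrow> Node k {#(0, t1), (0, t2)#} \<in> T d"
| T_III: "\<lbrakk>t1 \<in> T d; \<not> is_monomial t1; t2 \<in> T d; \<not> is_monomial t2;
            t3 \<in> T d; \<not> is_monomial t3\<rbrakk>
          \<Longrightarrow> Node (\<lambda>_. 0) {#(0, t1), (0, t2), (0, t3)#} \<in> T d"

primrec hom :: "real \<Rightarrow> real \<Rightarrow> nat \<Rightarrow> sym \<Rightarrow> real" where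
  "hom s \<kappa> d Xi = - s - 3/2 - \<kappa>"
| "hom s \<kappa> d (Node k M) =
     2 * s * real (k 0) + (\<Sum>i=1..d. real (k i))
     + sum_mset (image_mset (\<lambda>(j, h). h + 2 * s - (if j = 0 then 0 else 1))
                   (image_mset (map_prod id (hom s \<kappa> d)) M))"

end

theory Submission
  imports Defs
begin

text \<open>Measure a symbol by its number of nodes plus the total degree of its monomial
  decorations.  Induction over the formation rules gives \<open>|\<tau>| \<ge> |\<Xi>| + c size(\<tau>)\<close>
  with \<open>c = 4s - 3 - 2\<kappa>\<close> whenever \<open>s \<le> 1\<close> and \<open>\<kappa> \<ge> 0\<close>.  The binding rule is the cubic
  product: \<open>|I(\<Xi>)\<^sup>3| = |\<Xi>| + c\<close>.  So for \<open>s \<le> 3/4\<close> this symbol is a counterexample,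
  while for \<open>s > 3/4\<close> and \<open>\<kappa> < 2s - 3/2\<close> we have \<open>c > 0\<close>: then \<open>\<Xi>\<close> is the strict
  minimiser, and a bound on the homogeneity bounds the size, leaving finitely many symbols.\<close>

definition exp_degree :: "nat \<Rightarrow> (nat \<Rightarrow> nat) \<Rightarrow> nat" where
  "exp_degree d k = k 0 + (\<Sum>i=1..d. k i)"

primrec sym_size :: "nat \<Rightarrow> sym \<Rightarrow> nat" where
  "sym_size d Xi = 0"
| "sym_size d (Node k M) = 1 + exp_degree d k
     + sum_mset (image_mset snd (image_mset (map_prod id (sym_size d)) M))"

lemma sym_size_Node [simp]:
  "sym_size d (Node k M) = 1 + exp_degree d k + (\<Sum>(j, t)\<in>#M. sym_size d t)"
  by (simp add: multiset.map_comp comp_def case_prod_unfold)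

declare sym_size.simps(2) [simp del]

lemma hom_monomial: "hom s \<kappa> d (monomial k) = 2 * s * real (k 0) + (\<Sum>i=1..d. real (k i))"
  by (simp add: monomial_def)

lemma finite_multisets_size_le:
  assumes "finite A"
  shows "finite {M. set_mset M \<subseteq> A \<and> size M \<le> n}"
proof -
  have "{M. set_mset M \<subseteq> A \<and> size M \<le> n} = mset ` {xs. set xs \<subseteq> A \<and> length xs \<le> n}"
    by (auto simp: image_iff) (metis ex_mset set_mset_mset size_mset)
  then show ?thesis
    using finite_lists_length_le[OF assms] by simp
qed

lemma exp_le_degree: "i \<le> d \<Longrightarrow> k i \<le> exp_degree d k"
proof (cases "i = 0")
  case False
  assume "i \<le> d"
  then have "k i \<le> (\<Sum>i=1..d. k i)" using False by (intro member_le_sum) auto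
  then show ?thesis by (simp add: exp_degree_def)
qed (simp add: exp_degree_def)

lemma finite_valid_exps_degree_le: "finite {k. valid_exp d k \<and> exp_degree d k \<le> n}"
proof (rule finite_subset)
  show "{k. valid_exp d k \<and> exp_degree d k \<le> n}
      \<subseteq> {k. \<forall>i. (i \<in> {..d} \<longrightarrow> k i \<in> {..n}) \<and> (i \<notin> {..d} \<longrightarrow> k i = 0)}"
  proof (intro subsetI CollectI allI conjI impI)
    fix k i assume k: "k \<in> {k. valid_exp d k \<and> exp_degree d k \<le> n}"
    show "k i \<in> {..n}" if "i \<in> {..d}" using k that exp_le_degree[of i d k] by simp
    show "k i = 0" if "i \<notin> {..d}" using k that by (simp add: valid_exp_def)
  qed
qed (rule finite_set_of_finite_funs; simp)

lemma T_Node_shape: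
  assumes "Node k M \<in> T d"
  shows "valid_exp d k" "size M \<le> 3" "\<And>j t. (j, t) \<in># M \<Longrightarrow> j \<le> d \<and> t \<in> T d"
  using assms by (auto elim: T.cases simp: monomial_def valid_exp_def)

lemma sym_size_child_less:
  assumes "(j, t) \<in># M"
  shows "sym_size d t < sym_size d (Node k M)"
proof -
  obtain M' where "M = add_mset (j, t) M'" using multi_member_split[OF assms] by blast
  then show ?thesis by simp
qed

lemma finite_T_size_le: "finite {\<tau> \<in> T d. sym_size d \<tau> \<le> n}"
proof (induction n)
  case 0
  have "{\<tau> \<in> T d. sym_size d \<tau> \<le> 0} \<subseteq> {Xi}"
  proof safe
    fix \<tau> assume "sym_size d \<tau> = 0"
    then show "\<tau> = Xi" by (cases \<tau>) simp_all
  qed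
  then show ?case by (rule finite_subset) simp
next
  case (Suc n)
  let ?S = "{\<tau> \<in> T d. sym_size d \<tau> \<le> n}"
  let ?K = "{k. valid_exp d k \<and> exp_degree d k \<le> n}"
  let ?E = "{M. set_mset M \<subseteq> {..d} \<times> ?S \<and> size M \<le> 3}"
  have "{\<tau> \<in> T d. sym_size d \<tau> \<le> Suc n} \<subseteq> insert Xi (case_prod Node ` (?K \<times> ?E))"
  proof safe
    fix \<tau> assume \<tau>: "\<tau> \<in> T d" "sym_size d \<tau> \<le> Suc n" "\<tau> \<notin> case_prod Node ` (?K \<times> ?E)"
    show "\<tau> = Xi"
    proof (cases \<tau>)
      case (Node k M)
      have "k \<in> ?K" using \<tau> Node T_Node_shape(1) by simp
      moreover have "M \<in> ?E"
        using \<tau> Node T_Node_shape(2,3) sym_size_child_less[of _ _ M d k] by fastforce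
      ultimately show ?thesis using \<tau>(3) Node by blast
    qed
  qed
  moreover have "finite ?E" using Suc.IH by (intro finite_multisets_size_le) simp
  ultimately show ?case
    using finite_valid_exps_degree_le by (auto intro: finite_subset)
qed

lemma degree_scaled_le_hom_monomial:
  fixes c s :: real
  assumes "c \<le> 2 * s" "c \<le> 1"
  shows "c * real (exp_degree d k) \<le> hom s \<kappa> d (monomial k)"
proof -
  have "c * real (k 0) \<le> 2 * s * real (k 0)" using assms by (intro mult_right_mono) auto
  moreover have "c * (\<Sum>i=1..d. real (k i)) \<le> 1 * (\<Sum>i=1..d. real (k i))"
    using assms by (intro mult_right_mono sum_nonneg) auto
  ultimately show ?thesis by (simp add: exp_degree_def hom_monomial distrib_left)
qed

lemma hom_ge_size_bound:
  fixes s \<kappa> :: real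
  assumes "\<tau> \<in> T d" "s \<le> 1" "0 \<le> \<kappa>"
  shows "hom s \<kappa> d Xi + (4*s - 3 - 2*\<kappa>) * real (sym_size d \<tau>) \<le> hom s \<kappa> d \<tau>"
proof -
  define c where "c = 4*s - 3 - 2*\<kappa>"
  \<comment> \<open>One constraint per formation rule; the last one, for the cubic product, is an equality.\<close>
  have c: "c \<le> 1" "c \<le> 2*s - 1" "hom s \<kappa> d Xi + c \<le> 0"
    "c \<le> hom s \<kappa> d Xi + 4*s" "c \<le> 2 * hom s \<kappa> d Xi + 6*s"
    using assms by (auto simp: c_def)
  have deg: "c * real (exp_degree d k) \<le> hom s \<kappa> d (monomial k)" for k
    using c by (intro degree_scaled_le_hom_monomial) auto
  have "hom s \<kappa> d Xi + c * real (sym_size d \<tau>) \<le> hom s \<kappa> d \<tau>"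
    using assms(1)
  proof (induction rule: T.induct)
    case T_Xi
    then show ?case by simp
  next
    case (T_mono k)
    show ?case using deg[of k] c by (simp add: monomial_def distrib_left)
  next
    case (T_I k t1)
    show ?case using deg[of k] c T_I.IH by (simp add: hom_monomial distrib_left)
  next
    case (T_Ij k j t1)
    show ?case using deg[of k] c T_Ij by (simp add: hom_monomial distrib_left)
  next
    case (T_II k t1 t2)
    show ?case using deg[of k] c T_II.IH by (simp add: hom_monomial distrib_left)
  next
    case (T_III t1 t2 t3)
    show ?case using c T_III.IH by (simp add: exp_degree_def distrib_left)
  qed
  then show ?thesis by (simp add: c_def)
qed

lemma hom_Xi_less:
  fixes s \<kappa> :: real
  assumes "\<tau> \<in> T d" "\<tau> \<noteq> Xi" "s \<le> 1" "0 \<le> \<kappa>" "\<kappa> < 2*s - 3/2"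
  shows "hom s \<kappa> d Xi < hom s \<kappa> d \<tau>"
proof -
  have "1 \<le> sym_size d \<tau>" using assms(2) by (cases \<tau>) auto
  then have "0 < (4*s - 3 - 2*\<kappa>) * real (sym_size d \<tau>)" using assms(5) by simp
  then show ?thesis using hom_ge_size_bound[OF assms(1,3,4)] by linarith
qed

lemma finite_T_hom_less:
  fixes s \<kappa> \<beta> :: real
  assumes "s \<le> 1" "0 \<le> \<kappa>" "\<kappa> < 2*s - 3/2"
  shows "finite {\<tau> \<in> T d. hom s \<kappa> d \<tau> < \<beta>}"
proof -
  define c where "c = 4*s - 3 - 2*\<kappa>"
  have "0 < c" using assms(3) by (simp add: c_def)
  define N where "N = nat \<lceil>(\<beta> - hom s \<kappa> d Xi) / c\<rceil>"
  have "sym_size d \<tau> \<le> N" if "\<tau> \<in> T d" "hom s \<kappa> d \<tau> < \<beta>" for \<tau>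
  proof -
    have "c * real (sym_size d \<tau>) < \<beta> - hom s \<kappa> d Xi"
      using hom_ge_size_bound[OF that(1) assms(1,2)] that(2) by (simp add: c_def)
    then have "real (sym_size d \<tau>) < (\<beta> - hom s \<kappa> d Xi) / c"
      using \<open>0 < c\<close> by (simp add: field_simps)
    then show ?thesis unfolding N_def by linarith
  qed
  then have "{\<tau> \<in> T d. hom s \<kappa> d \<tau> < \<beta>} \<subseteq> {\<tau> \<in> T d. sym_size d \<tau> \<le> N}" by blast
  then show ?thesis using finite_T_size_le by (rule finite_subset)
qed

lemma I_Xi_cubed_in_T: "Node (\<lambda>_. 0) {#(0, Xi), (0, Xi), (0, Xi)#} \<in> T d"
  by (intro T.intros) (auto simp: is_monomial_def monomial_def)

lemma hom_I_Xi_cubed: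
  "hom s \<kappa> d (Node (\<lambda>_. 0) {#(0, Xi), (0, Xi), (0, Xi)#}) = hom s \<kappa> d Xi + (4*s - 3 - 2*\<kappa>)"
  by simp

theorem lemma2p2:
  fixes s :: real and d :: nat
  assumes "1 \<le> d" and "0 < s" and "s < 1"
  shows "(s \<le> 3/4 \<longrightarrow>
            (\<forall>\<kappa>>0. \<exists>\<tau>\<in>T d - {Xi}. hom s \<kappa> d \<tau> \<le> hom s \<kappa> d Xi))
       \<and> (3/4 < s \<longrightarrow>
            (\<exists>\<kappa>0>0. \<forall>\<kappa>. 0 < \<kappa> \<and> \<kappa> < \<kappa>0 \<longrightarrow>
               (\<forall>\<tau>\<in>T d - {Xi}. hom s \<kappa> d Xi < hom s \<kappa> d \<tau>)
               \<and> (\<forall>\<beta>::real. finite {\<tau>\<in>T d. hom s \<kappa> d \<tau> < \<beta>})))"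
proof (intro conjI impI allI)
  fix \<kappa> :: real
  assume "s \<le> 3/4" "0 < \<kappa>"
  then show "\<exists>\<tau>\<in>T d - {Xi}. hom s \<kappa> d \<tau> \<le> hom s \<kappa> d Xi"
    using I_Xi_cubed_in_T hom_I_Xi_cubed
    by (intro bexI[of _ "Node (\<lambda>_. 0) {#(0, Xi), (0, Xi), (0, Xi)#}"]) auto
next
  assume "3/4 < s"
  show "\<exists>\<kappa>0>0. \<forall>\<kappa>. 0 < \<kappa> \<and> \<kappa> < \<kappa>0 \<longrightarrow>
          (\<forall>\<tau>\<in>T d - {Xi}. hom s \<kappa> d Xi < hom s \<kappa> d \<tau>)
          \<and> (\<forall>\<beta>::real. finite {\<tau>\<in>T d. hom s \<kappa> d \<tau> < \<beta>})"
    using \<open>3/4 < s\<close> \<open>s < 1\<close> hom_Xi_less finite_T_hom_less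
    by (intro exI[of _ "2*s - 3/2"]) auto
qed

end
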